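(* Let $1<q<p<\infty$ and let $f:(0,\infty)\to\mathbb R$, $f(x)=q(q-1)x^{-q-1}\mathbbm 1_{[(q-1)^{1/q},\infty)}(x)$. Then $f$ is a probability density, and if $\xi_1,\dots,\xi_n$ are independent copies of a random variable $\xi$ with density $f$, then for all $n\in\mathbb N$ and all $a\in\mathbb R^n$, \[ \mathbb E\Big(\sum_{j=1}^n|a_j\xi_j|^p\Big)^{1/p}\simeq_{p,q}\|a\|_q, \] where $\simeq_{p,q}$ means two-sided inequality with positive constants depending only on $p$ and $q$.
   Context: $\|a\|_q=(\sum_j|a_j|^q)^{1/q}$. *)

theory Defs
  imports "HOL-Probability.Probability"
begin

text \<open>The density f(x) = q(q-1) x^(-q-1) 1_{[(q-1)^(1/q), oo)}(x), extended by 0 to the whole real line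
  (it already vanishes on (0,(q-1)^(1/q)) and the threshold is positive for q > 1).\<close>
definition dens :: "real \<Rightarrow> real \<Rightarrow> real" where
  "dens q x = (if (q - 1) powr (1 / q) \<le> x then q * (q - 1) * x powr (- q - 1) else 0)"

definition lq_norm :: "real \<Rightarrow> nat \<Rightarrow> (nat \<Rightarrow> real) \<Rightarrow> real" where
  "lq_norm q n a = (\<Sum>j<n. \<bar>a j\<bar> powr q) powr (1 / q)"

end

theory Submission
  imports Defs
begin

text \<open>Put \<open>l = \<parallel>a\<parallel>\<^sub>q\<close>. For the upper bound, split each \<open>y\<^sub>j = a\<^sub>j \<xi>\<^sub>j\<close> at level \<open>l\<close>:
  superadditivity of \<open>t \<mapsto> t\<^sup>p\<close> and \<open>U\<^bsup>1/p\<^esup> \<le> l + l\<^bsup>1-p\<^esup> U\<close> give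
  \<open>(\<Sum>\<^sub>j |y\<^sub>j|\<^sup>p)\<^bsup>1/p\<^esup> \<le> l + \<Sum>\<^sub>j \<phi>(y\<^sub>j)\<close> with \<open>\<phi>(y) = l\<^bsup>1-p\<^esup>|y|\<^sup>p\<close> for \<open>|y| \<le> l\<close> and
  \<open>\<phi>(y) = |y|\<close> otherwise (\<open>\<phi> = lp_split p l\<close>). Because \<open>q < p\<close> the small part and because \<open>q > 1\<close> the tail of
  \<open>\<phi>(a \<xi>)\<close> are integrable against \<open>x\<^bsup>-q-1\<^esup>\<close>, with \<open>E \<phi>(a \<xi>) \<le> K |a|\<^sup>q l\<^bsup>1-q\<^esup>\<close>; summing over
  \<open>j\<close> gives \<open>E \<le> (1 + K) l\<close>. For the lower bound, the tail \<open>P(\<xi> \<ge> s) = (q - 1) s\<^bsup>-q\<^esup>\<close> yields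
  \<open>P(|a\<^sub>j \<xi>\<^sub>j| < l) \<le> exp(-c (|a\<^sub>j|/l)\<^sup>q)\<close> with \<open>c = min 1 (q - 1)\<close>, so by independence some
  coordinate, and hence the \<open>\<ell>\<^sub>p\<close>-norm, reaches \<open>l\<close> with probability at least \<open>1 - exp (-c)\<close>.\<close>

section \<open>Elementary inequalities\<close>

lemma add_powr_le_powr_add:
  fixes x y p :: real
  assumes "0 \<le> x" and "0 \<le> y" and "1 \<le> p"
  shows "x powr p + y powr p \<le> (x + y) powr p"
proof -
  have "z powr p \<le> (x + y) powr (p - 1) * z" if "0 \<le> z" "z \<le> x + y" for z
  proof (cases "z = 0")
    case False
    have "z powr p = z powr (p - 1) * z"
      using powr_mult_base[of z "p - 1"] that by (simp add: mult.commute)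
    also have "\<dots> \<le> (x + y) powr (p - 1) * z"
      using that assms by (intro mult_right_mono powr_mono2) auto
    finally show ?thesis .
  qed (use assms in simp)
  then have "x powr p + y powr p \<le> (x + y) powr (p - 1) * x + (x + y) powr (p - 1) * y"
    using assms by (intro add_mono) auto
  also have "\<dots> = (x + y) powr p"
    using powr_mult_base[of "x + y" "p - 1"] assms by (simp add: algebra_simps)
  finally show ?thesis .
qed

lemma sum_powr_le_powr_sum:
  fixes v :: "'i \<Rightarrow> real" and p :: real
  assumes "\<And>j. j \<in> J \<Longrightarrow> 0 \<le> v j" and "1 \<le> p"
  shows "(\<Sum>j\<in>J. v j powr p) \<le> (\<Sum>j\<in>J. v j) powr p"
  using assms(1)
proof (induction J rule: infinite_finite_induct)
  case (insert j J)
  have "(\<Sum>j\<in>insert j J. v j powr p) \<le> v j powr p + (\<Sum>j\<in>J. v j) powr p"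
    using insert by simp
  also have "\<dots> \<le> (v j + (\<Sum>j\<in>J. v j)) powr p"
    using insert assms(2) by (intro add_powr_le_powr_add sum_nonneg) auto
  finally show ?case using insert by simp
qed (use assms in auto)

lemma root_powr_le_linear:
  fixes U l p :: real
  assumes "0 \<le> U" and "0 < l" and "1 \<le> p"
  shows "U powr (1 / p) \<le> l + l powr (1 - p) * U"
proof (cases "U \<le> l powr p")
  case True
  have "U powr (1 / p) \<le> (l powr p) powr (1 / p)"
    using True assms by (intro powr_mono2) auto
  also have "\<dots> = l" using assms by (simp add: powr_powr)
  finally show ?thesis using assms by (simp add: add_increasing2)
next
  case False
  then have "0 < U" using powr_ge_zero[of l p] by linarith
  have "U powr (1 / p) = U powr (1 / p - 1) * U"
    using powr_mult_base[of U "1 / p - 1"] \<open>0 < U\<close> by (simp add: mult.commute)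
  also have "U powr (1 / p - 1) \<le> (l powr p) powr (1 / p - 1)"
    using False assms by (intro powr_mono2') (auto simp: field_simps)
  also have "(l powr p) powr (1 / p - 1) = l powr (1 - p)"
    using assms by (simp add: powr_powr algebra_simps)
  finally show ?thesis using \<open>0 < U\<close> assms by (simp add: mult_right_mono add_increasing)
qed

lemma abs_le_sum_powr_root:
  fixes z :: "'i \<Rightarrow> real"
  assumes "finite J" and "j \<in> J" and "0 < p"
  shows "\<bar>z j\<bar> \<le> (\<Sum>j\<in>J. \<bar>z j\<bar> powr p) powr (1 / p)"
proof -
  have "\<bar>z j\<bar> powr p \<le> (\<Sum>j\<in>J. \<bar>z j\<bar> powr p)"
    using assms(1,2) by (intro member_le_sum) auto
  then have "(\<bar>z j\<bar> powr p) powr (1 / p) \<le> (\<Sum>j\<in>J. \<bar>z j\<bar> powr p) powr (1 / p)"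
    using assms(3) by (intro powr_mono2) auto
  then show ?thesis using assms(3) by (simp add: powr_powr)
qed

definition lp_split :: "real \<Rightarrow> real \<Rightarrow> real \<Rightarrow> real" where
  "lp_split p l y = l powr (1 - p) * (if \<bar>y\<bar> \<le> l then \<bar>y\<bar> powr p else 0) + (if l < \<bar>y\<bar> then \<bar>y\<bar> else 0)"

lemma lp_split_nonneg: "0 < l \<Longrightarrow> 0 \<le> lp_split p l y"
  unfolding lp_split_def by simp

lemma borel_measurable_lp_split [measurable]: "lp_split p l \<in> borel_measurable borel"
  unfolding lp_split_def by measurable

lemma lp_norm_le_lp_split_sum:
  fixes z :: "'i \<Rightarrow> real" and l p :: real
  assumes "finite J" and "0 < l" and "1 \<le> p"
  shows "(\<Sum>j\<in>J. \<bar>z j\<bar> powr p) powr (1 / p) \<le> l + (\<Sum>j\<in>J. lp_split p l (z j))"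
proof -
  define U where "U = (\<Sum>j\<in>J. if \<bar>z j\<bar> \<le> l then \<bar>z j\<bar> powr p else 0)"
  define v where "v j = (if l < \<bar>z j\<bar> then \<bar>z j\<bar> else 0)" for j
  have "0 \<le> U" unfolding U_def by (intro sum_nonneg) auto
  have "0 \<le> v j" for j unfolding v_def by auto
  have "(\<Sum>j\<in>J. \<bar>z j\<bar> powr p) = U + (\<Sum>j\<in>J. v j powr p)"
    unfolding U_def v_def by (simp flip: sum.distrib) (intro sum.cong; auto)
  also have "\<dots> \<le> (U powr (1 / p)) powr p + (\<Sum>j\<in>J. v j) powr p"
    using \<open>0 \<le> U\<close> \<open>\<And>j. 0 \<le> v j\<close> assms by (simp add: powr_powr sum_powr_le_powr_sum)
  also have "\<dots> \<le> (U powr (1 / p) + (\<Sum>j\<in>J. v j)) powr p"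
    using \<open>\<And>j. 0 \<le> v j\<close> assms by (intro add_powr_le_powr_add sum_nonneg) auto
  finally have "(\<Sum>j\<in>J. \<bar>z j\<bar> powr p) powr (1 / p) \<le> ((U powr (1 / p) + (\<Sum>j\<in>J. v j)) powr p) powr (1 / p)"
    using assms by (intro powr_mono2) (auto intro: sum_nonneg)
  also have "\<dots> = U powr (1 / p) + (\<Sum>j\<in>J. v j)"
    using \<open>\<And>j. 0 \<le> v j\<close> assms by (simp add: powr_powr sum_nonneg)
  also have "\<dots> \<le> l + l powr (1 - p) * U + (\<Sum>j\<in>J. v j)"
    using root_powr_le_linear[OF \<open>0 \<le> U\<close> assms(2,3)] by simp
  also have "\<dots> = l + (\<Sum>j\<in>J. lp_split p l (z j))"
    by (simp add: U_def v_def lp_split_def sum_distrib_left sum.distrib)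
  finally show ?thesis .
qed

section \<open>Integrals of powers and product marginals\<close>

lemma nn_integral_powr_Icc_le:
  fixes r t m :: real
  assumes "0 < t" and "0 < r"
  shows "(\<integral>\<^sup>+ x. ennreal (x powr (r - 1)) * indicator {t..m} x \<partial>lborel) \<le> ennreal (m powr r / r)"
proof (cases "t \<le> m")
  case True
  have "(\<integral>\<^sup>+ x. ennreal (x powr (r - 1)) * indicator {t..m} x \<partial>lborel)
      = ennreal (m powr r / r - t powr r / r)"
  proof (rule nn_integral_FTC_Icc)
    fix x assume "x \<in> {t..m}"
    then have "0 < x" using \<open>0 < t\<close> by simp
    show "((\<lambda>x. x powr r / r) has_real_derivative x powr (r - 1)) (at x)"
      using has_real_derivative_powr[OF \<open>0 < x\<close>, of r] \<open>0 < x\<close> \<open>0 < r\<close>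
      by (auto intro!: derivative_eq_intros)
  qed (use True in auto)
  also have "\<dots> \<le> ennreal (m powr r / r)"
    using \<open>0 < r\<close> by (intro ennreal_leI) simp
  finally show ?thesis .
qed simp

lemma nn_integral_powr_atLeast:
  fixes r b :: real
  assumes "0 < b" and "0 < r"
  shows "(\<integral>\<^sup>+ x. ennreal (x powr (- r - 1)) * indicator {b..} x \<partial>lborel) = ennreal (b powr (- r) / r)"
proof -
  have "(\<integral>\<^sup>+ x. ennreal (x powr (- r - 1)) * indicator {b..} x \<partial>lborel)
      = ennreal (0 - (- (b powr (- r) / r)))"
  proof (rule nn_integral_FTC_atLeast)
    fix x assume "b \<le> x"
    then have "0 < x" using \<open>0 < b\<close> by simp
    show "((\<lambda>x. - (x powr (- r) / r)) has_real_derivative x powr (- r - 1)) (at x)"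
      using has_real_derivative_powr[OF \<open>0 < x\<close>, of "- r"] \<open>0 < x\<close> \<open>0 < r\<close>
      by (auto intro!: derivative_eq_intros)
  next
    show "((\<lambda>x. - (x powr (- r) / r)) \<longlongrightarrow> 0) at_top"
      using tendsto_divide[OF tendsto_minus[OF tendsto_neg_powr[of "- r" "\<lambda>x. x" at_top]] tendsto_const, of r]
        \<open>0 < r\<close>
      by (simp add: filterlim_ident)
  qed auto
  then show ?thesis by simp
qed

lemma nn_integral_PiM_component:
  fixes g :: "'a \<Rightarrow> ennreal"
  assumes "\<And>i. i \<in> I \<Longrightarrow> prob_space (M i)" and "i \<in> I" and "g \<in> borel_measurable (M i)"
  shows "(\<integral>\<^sup>+ \<omega>. g (\<omega> i) \<partial>PiM I M) = (\<integral>\<^sup>+ x. g x \<partial>M i)"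
proof -
  have "(\<integral>\<^sup>+ x. g x \<partial>M i) = (\<integral>\<^sup>+ x. g x \<partial>distr (PiM I M) (M i) (\<lambda>\<omega>. \<omega> i))"
    using distr_PiM_component[of I M i, OF assms(1,2)] by simp
  also have "\<dots> = (\<integral>\<^sup>+ \<omega>. g (\<omega> i) \<partial>PiM I M)"
    using assms(2,3) by (intro nn_integral_distr) auto
  finally show ?thesis by simp
qed

section \<open>The density\<close>

abbreviation dens_measure :: "real \<Rightarrow> real measure" where
  "dens_measure q \<equiv> density lborel (dens q)"

lemma dens_threshold_pos: "1 < (q::real) \<Longrightarrow> 0 < (q - 1) powr (1 / q)"
  by (auto simp: powr_def)

lemma dens_threshold_tail:
  assumes "1 < (q::real)"
  shows "(q - 1) * ((q - 1) powr (1 / q)) powr (- q) = 1"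
proof -
  have "((q - 1) powr (1 / q)) powr q = q - 1"
    using assms by (simp add: powr_powr)
  then show ?thesis
    using assms by (simp add: powr_minus)
qed

lemma dens_nonneg: "1 < q \<Longrightarrow> 0 \<le> dens q x"
  unfolding dens_def by auto

lemma borel_measurable_dens [measurable]: "dens q \<in> borel_measurable borel"
  unfolding dens_def by measurable

lemma dens_eq_0: "x < (q - 1) powr (1 / q) \<Longrightarrow> dens q x = 0"
  unfolding dens_def by auto

lemma nn_integral_dens_atLeast:
  assumes "1 < q" and "(q - 1) powr (1 / q) \<le> s"
  shows "(\<integral>\<^sup>+ x. ennreal (dens q x) * indicator {s..} x \<partial>lborel) = ennreal ((q - 1) * s powr (- q))"
proof -
  have "0 < s" using dens_threshold_pos[OF \<open>1 < q\<close>] assms(2) by linarith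
  have "(\<integral>\<^sup>+ x. ennreal (dens q x) * indicator {s..} x \<partial>lborel)
      = (\<integral>\<^sup>+ x. ennreal (q * (q - 1)) * (ennreal (x powr (- q - 1)) * indicator {s..} x) \<partial>lborel)"
    using assms by (intro nn_integral_cong) (auto simp: dens_def ennreal_mult split: split_indicator)
  also have "\<dots> = ennreal (q * (q - 1)) * ennreal (s powr (- q) / q)"
    using nn_integral_powr_atLeast[OF \<open>0 < s\<close>, of q] assms(1) by (simp add: nn_integral_cmult)
  also have "\<dots> = ennreal ((q - 1) * s powr (- q))"
    using assms(1) by (simp flip: ennreal_mult)
  finally show ?thesis .
qed

lemma nn_integral_dens_eq_1:
  assumes "1 < q"
  shows "(\<integral>\<^sup>+ x. ennreal (dens q x) \<partial>lborel) = 1"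
proof -
  let ?t = "(q - 1) powr (1 / q)"
  have "(\<integral>\<^sup>+ x. ennreal (dens q x) \<partial>lborel) = (\<integral>\<^sup>+ x. ennreal (dens q x) * indicator {?t..} x \<partial>lborel)"
    by (intro nn_integral_cong) (auto simp: dens_eq_0 split: split_indicator)
  then show ?thesis
    using nn_integral_dens_atLeast[OF assms order.refl] dens_threshold_tail[OF assms] by simp
qed

lemma prob_space_dens_measure: "1 < q \<Longrightarrow> prob_space (dens_measure q)"
  by (intro prob_spaceI) (simp add: emeasure_density nn_integral_dens_eq_1)

lemma measure_dens_atLeast:
  assumes "1 < q" and "(q - 1) powr (1 / q) \<le> s"
  shows "measure (dens_measure q) {s..} = (q - 1) * s powr (- q)"
  using nn_integral_dens_atLeast[OF assms] assms(1)
  by (simp add: emeasure_density measure_def)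

section \<open>One coordinate\<close>

lemma dens_mult_lp_split_le:
  assumes "1 < q" and "0 < l" and "a \<noteq> 0"
  defines "t \<equiv> (q - 1) powr (1 / q)" and "m \<equiv> l / \<bar>a\<bar>"
  shows "dens q x * lp_split p l (a * x)
    \<le> l powr (1 - p) * \<bar>a\<bar> powr p * q * (q - 1) * (x powr (p - q - 1) * indicator {t..m} x)
      + \<bar>a\<bar> * q * (q - 1) * (x powr (- q) * indicator {m..} x)"
    (is "?L \<le> ?A * ?R1 + ?B * ?R2")
proof -
  have "0 \<le> ?R1" "0 \<le> ?R2" by (simp_all split: split_indicator)
  moreover have "0 \<le> ?A" "0 \<le> ?B" using assms(1) by simp_all
  ultimately have RHS_nonneg: "0 \<le> ?A * ?R1 + ?B * ?R2" by simp
  show ?thesis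
  proof (cases "t \<le> x")
    case False
    then show ?thesis using RHS_nonneg by (simp add: t_def dens_eq_0)
  next
    case True
    then have "0 < x" using dens_threshold_pos[OF assms(1)] t_def by linarith
    have dens_x: "dens q x = q * (q - 1) * x powr (- q - 1)"
      using True by (simp add: dens_def t_def)
    have ax: "\<bar>a * x\<bar> = \<bar>a\<bar> * x" using \<open>0 < x\<close> by (simp add: abs_mult)
    have "0 < \<bar>a\<bar>" using assms(3) by simp
    show ?thesis
    proof (cases "\<bar>a * x\<bar> \<le> l")
      case True
      then have "x \<le> m" using ax \<open>0 < \<bar>a\<bar>\<close> by (simp add: m_def field_simps)
      have "?L = ?A * (x powr (- q - 1) * x powr p)"
        using True ax \<open>0 < x\<close> by (simp add: dens_x lp_split_def powr_mult)
      also have "x powr (- q - 1) * x powr p = ?R1"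
        using \<open>t \<le> x\<close> \<open>x \<le> m\<close> by (simp add: powr_add[symmetric] algebra_simps)
      finally show ?thesis using \<open>0 \<le> ?B\<close> \<open>0 \<le> ?R2\<close> by simp
    next
      case False
      then have "m \<le> x" using ax \<open>0 < \<bar>a\<bar>\<close> by (simp add: m_def field_simps)
      have "?L = ?B * (x powr (- q - 1) * x)"
        using False ax \<open>0 < x\<close> assms(2) by (simp add: dens_x lp_split_def)
      also have "x powr (- q - 1) * x = ?R2"
        using powr_mult_base[of x "- q - 1"] \<open>0 < x\<close> \<open>m \<le> x\<close> by (simp add: mult.commute)
      finally show ?thesis using \<open>0 \<le> ?A\<close> \<open>0 \<le> ?R1\<close> by simp
    qed
  qed
qed

lemma lp_split_moment_eq:
  fixes a l p q :: real
  assumes "a \<noteq> 0" and "0 < l" and "1 < q" and "q < p"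
  defines "m \<equiv> l / \<bar>a\<bar>"
  shows "l powr (1 - p) * \<bar>a\<bar> powr p * q * (q - 1) * (m powr (p - q) / (p - q))
      + \<bar>a\<bar> * q * (q - 1) * (m powr (- (q - 1)) / (q - 1))
    = (q * (q - 1) / (p - q) + q) * \<bar>a\<bar> powr q * l powr (1 - q)"
proof -
  have "l powr (1 - p) * \<bar>a\<bar> powr p * m powr (p - q)
      = (l powr (1 - p) * l powr (p - q)) * (\<bar>a\<bar> powr p / \<bar>a\<bar> powr (p - q))"
    using assms(2) by (simp add: m_def powr_divide)
  also have "\<dots> = \<bar>a\<bar> powr q * l powr (1 - q)"
    by (simp add: powr_add[symmetric] powr_diff[symmetric])
  finally have "l powr (1 - p) * \<bar>a\<bar> powr p * m powr (p - q) = \<bar>a\<bar> powr q * l powr (1 - q)" .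
  then have small: "l powr (1 - p) * \<bar>a\<bar> powr p * q * (q - 1) * (m powr (p - q) / (p - q))
      = q * (q - 1) / (p - q) * (\<bar>a\<bar> powr q * l powr (1 - q))"
    by (simp add: field_simps)
  have "\<bar>a\<bar> * m powr (- (q - 1)) = \<bar>a\<bar> powr q * l powr (1 - q)"
    using assms(1,2) by (simp add: m_def powr_divide powr_add[symmetric] powr_diff[symmetric] field_simps)
  then have large: "\<bar>a\<bar> * q * (q - 1) * (m powr (- (q - 1)) / (q - 1)) = q * (\<bar>a\<bar> powr q * l powr (1 - q))"
    using assms(3) by (simp add: field_simps)
  show ?thesis unfolding small large by (simp add: algebra_simps)
qed

lemma nn_integral_lp_split_dens_le:
  assumes "1 < q" and "q < p" and "0 < l"
  shows "(\<integral>\<^sup>+ x. ennreal (lp_split p l (a * x)) \<partial>dens_measure q)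
    \<le> ennreal ((q * (q - 1) / (p - q) + q) * \<bar>a\<bar> powr q * l powr (1 - q))"
proof (cases "a = 0")
  case True
  then show ?thesis by (simp add: lp_split_def)
next
  case False
  define t where "t = (q - 1) powr (1 / q)"
  define m where "m = l / \<bar>a\<bar>"
  define A where "A = l powr (1 - p) * \<bar>a\<bar> powr p * q * (q - 1)"
  define B where "B = \<bar>a\<bar> * q * (q - 1)"
  have "0 < m" using False assms(3) by (simp add: m_def)
  have "0 \<le> A" "0 \<le> B" using assms(1) by (simp_all add: A_def B_def)
  have "(\<integral>\<^sup>+ x. ennreal (lp_split p l (a * x)) \<partial>dens_measure q)
      = (\<integral>\<^sup>+ x. ennreal (dens q x * lp_split p l (a * x)) \<partial>lborel)"
    using assms by (simp add: nn_integral_density ennreal_mult dens_nonneg lp_split_nonneg)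
  also have "\<dots> \<le> (\<integral>\<^sup>+ x. ennreal A * (ennreal (x powr (p - q - 1)) * indicator {t..m} x)
                   + ennreal B * (ennreal (x powr (- (q - 1) - 1)) * indicator {m..} x) \<partial>lborel)"
  proof (rule nn_integral_mono)
    fix x
    have "ennreal (dens q x * lp_split p l (a * x))
        \<le> ennreal (A * (x powr (p - q - 1) * indicator {t..m} x) + B * (x powr (- q) * indicator {m..} x))"
      using dens_mult_lp_split_le[OF assms(1,3) False] by (intro ennreal_leI) (simp add: A_def B_def t_def m_def)
    also have "\<dots> = ennreal A * (ennreal (x powr (p - q - 1)) * indicator {t..m} x)
          + ennreal B * (ennreal (x powr (- (q - 1) - 1)) * indicator {m..} x)"
      using \<open>0 \<le> A\<close> \<open>0 \<le> B\<close> by (simp add: ennreal_plus ennreal_mult split: split_indicator)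
    finally show "ennreal (dens q x * lp_split p l (a * x)) \<le> \<dots>" .
  qed
  also have "\<dots> = ennreal A * (\<integral>\<^sup>+ x. ennreal (x powr (p - q - 1)) * indicator {t..m} x \<partial>lborel)
      + ennreal B * (\<integral>\<^sup>+ x. ennreal (x powr (- (q - 1) - 1)) * indicator {m..} x \<partial>lborel)"
    by (simp add: nn_integral_add nn_integral_cmult)
  also have "\<dots> \<le> ennreal A * ennreal (m powr (p - q) / (p - q)) + ennreal B * ennreal (m powr (- (q - 1)) / (q - 1))"
    using nn_integral_powr_Icc_le[of t "p - q" m] nn_integral_powr_atLeast[OF \<open>0 < m\<close>, of "q - 1"]
      dens_threshold_pos[OF assms(1)] assms
    by (intro add_mono mult_left_mono) (auto simp: t_def)
  also have "\<dots> = ennreal (A * (m powr (p - q) / (p - q)) + B * (m powr (- (q - 1)) / (q - 1)))"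
    using \<open>0 \<le> A\<close> \<open>0 \<le> B\<close> assms by (simp add: ennreal_plus flip: ennreal_mult)
  also have "A * (m powr (p - q) / (p - q)) + B * (m powr (- (q - 1)) / (q - 1))
      = (q * (q - 1) / (p - q) + q) * \<bar>a\<bar> powr q * l powr (1 - q)"
    using lp_split_moment_eq[OF False assms(3,1,2)] by (simp add: A_def B_def m_def)
  finally show ?thesis .
qed

lemma measure_dens_abs_mult_less_le:
  assumes "1 < q" and "0 < l" and "\<bar>a\<bar> \<le> l"
  shows "measure (dens_measure q) {x. \<bar>a * x\<bar> < l} \<le> 1 - min 1 (q - 1) * (\<bar>a\<bar> / l) powr q"
proof (cases "a = 0")
  case True
  interpret prob_space "dens_measure q" using prob_space_dens_measure[OF assms(1)] .
  show ?thesis using True by simp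
next
  case False
  interpret prob_space "dens_measure q" using prob_space_dens_measure[OF assms(1)] .
  define t where "t = (q - 1) powr (1 / q)"
  define b where "b = max (l / \<bar>a\<bar>) t"
  have "{x. \<bar>a * x\<bar> < l} \<subseteq> space (dens_measure q) - {b..}"
  proof
    fix x assume "x \<in> {x. \<bar>a * x\<bar> < l}"
    then have "\<bar>x\<bar> < l / \<bar>a\<bar>" using False by (simp add: abs_mult field_simps)
    then show "x \<in> space (dens_measure q) - {b..}" by (auto simp: b_def)
  qed
  then have "measure (dens_measure q) {x. \<bar>a * x\<bar> < l} \<le> 1 - measure (dens_measure q) {b..}"
    using finite_measure_mono[of _ "space (dens_measure q) - {b..}"] prob_compl[of "{b..}"] by simp
  also have "measure (dens_measure q) {b..} = (q - 1) * b powr (- q)"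
    using assms(1) by (intro measure_dens_atLeast) (auto simp: b_def t_def)
  finally have "measure (dens_measure q) {x. \<bar>a * x\<bar> < l} \<le> 1 - (q - 1) * b powr (- q)" .
  moreover have "min 1 (q - 1) * (\<bar>a\<bar> / l) powr q \<le> (q - 1) * b powr (- q)"
  proof (cases "t \<le> l / \<bar>a\<bar>")
    case True
    then have "b powr (- q) = (\<bar>a\<bar> / l) powr q"
      using False assms(2) by (simp add: b_def powr_minus powr_divide)
    then show ?thesis using assms(1) by (simp add: mult_right_mono)
  next
    case False
    then have "(q - 1) * b powr (- q) = 1"
      using dens_threshold_tail[OF assms(1)] by (simp add: b_def t_def)
    moreover have "(\<bar>a\<bar> / l) powr q \<le> 1"
      using assms by (intro powr_le1) auto
    ultimately show ?thesis using assms(1) by (simp add: mult_le_one)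
  qed
  ultimately show ?thesis by linarith
qed

section \<open>The two-sided estimate\<close>

lemma lq_norm_powr: "0 < q \<Longrightarrow> lq_norm q n a powr q = (\<Sum>j<n. \<bar>a j\<bar> powr q)"
  unfolding lq_norm_def by (simp add: powr_powr sum_nonneg)

lemma abs_le_lq_norm: "0 < q \<Longrightarrow> j < n \<Longrightarrow> \<bar>a j\<bar> \<le> lq_norm q n a"
  unfolding lq_norm_def by (rule abs_le_sum_powr_root) auto

lemma nn_integral_lp_norm_le:
  fixes a :: "nat \<Rightarrow> real"
  assumes "1 < q" and "q < p" and "0 < lq_norm q n a"
  shows "(\<integral>\<^sup>+ \<omega>. ennreal ((\<Sum>j<n. \<bar>a j * \<omega> j\<bar> powr p) powr (1 / p)) \<partial>PiM {..<n} (\<lambda>_. dens_measure q))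
    \<le> ennreal ((1 + (q * (q - 1) / (p - q) + q)) * lq_norm q n a)"
proof -
  let ?P = "PiM {..<n} (\<lambda>_. dens_measure q)"
  let ?K = "q * (q - 1) / (p - q) + q"
  define l where "l = lq_norm q n a"
  interpret P: prob_space ?P
    by (intro prob_space_PiM prob_space_dens_measure assms(1))
  have "0 < l" using assms(3) by (simp add: l_def)
  have "(\<integral>\<^sup>+ \<omega>. ennreal ((\<Sum>j<n. \<bar>a j * \<omega> j\<bar> powr p) powr (1 / p)) \<partial>?P)
      \<le> (\<integral>\<^sup>+ \<omega>. ennreal l + (\<Sum>j<n. ennreal (lp_split p l (a j * \<omega> j))) \<partial>?P)"
  proof (rule nn_integral_mono)
    fix \<omega> :: "nat \<Rightarrow> real"
    have "(\<Sum>j<n. \<bar>a j * \<omega> j\<bar> powr p) powr (1 / p) \<le> l + (\<Sum>j<n. lp_split p l (a j * \<omega> j))"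
      using \<open>0 < l\<close> assms by (intro lp_norm_le_lp_split_sum) auto
    then show "ennreal ((\<Sum>j<n. \<bar>a j * \<omega> j\<bar> powr p) powr (1 / p))
        \<le> ennreal l + (\<Sum>j<n. ennreal (lp_split p l (a j * \<omega> j)))"
      using \<open>0 < l\<close> by (simp add: lp_split_nonneg sum_nonneg sum_ennreal flip: ennreal_plus)
  qed
  also have "\<dots> = ennreal l + (\<Sum>j<n. \<integral>\<^sup>+ x. ennreal (lp_split p l (a j * x)) \<partial>dens_measure q)"
  proof -
    have "(\<integral>\<^sup>+ \<omega>. ennreal (lp_split p l (a j * \<omega> j)) \<partial>?P)
        = (\<integral>\<^sup>+ x. ennreal (lp_split p l (a j * x)) \<partial>dens_measure q)" if "j < n" for j
      using that prob_space_dens_measure[OF assms(1)] by (intro nn_integral_PiM_component) auto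
    then show ?thesis by (simp add: nn_integral_add nn_integral_sum P.emeasure_space_1)
  qed
  also have "\<dots> \<le> ennreal l + (\<Sum>j<n. ennreal (?K * \<bar>a j\<bar> powr q * l powr (1 - q)))"
    using \<open>0 < l\<close> assms by (intro add_left_mono sum_mono nn_integral_lp_split_dens_le)
  also have "\<dots> = ennreal (l + (\<Sum>j<n. ?K * \<bar>a j\<bar> powr q * l powr (1 - q)))"
    using \<open>0 < l\<close> assms by (simp add: sum_ennreal sum_nonneg flip: ennreal_plus)
  also have "(\<Sum>j<n. ?K * \<bar>a j\<bar> powr q * l powr (1 - q)) = ?K * (l powr (1 - q) * (\<Sum>j<n. \<bar>a j\<bar> powr q))"
    by (simp add: sum_distrib_left sum_distrib_right mult_ac)
  also have "l powr (1 - q) * (\<Sum>j<n. \<bar>a j\<bar> powr q) = l powr (1 - q) * l powr q"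
    using assms(1) by (simp add: l_def lq_norm_powr)
  also have "\<dots> = l"
    using \<open>0 < l\<close> by (simp flip: powr_add)
  finally show ?thesis by (simp add: l_def algebra_simps)
qed

lemma measure_PiM_coords_below_lq_norm_le:
  fixes a :: "nat \<Rightarrow> real"
  assumes "1 < q" and "0 < lq_norm q n a"
  shows "measure (PiM {..<n} (\<lambda>_. dens_measure q)) (PiE {..<n} (\<lambda>j. {x. \<bar>a j * x\<bar> < lq_norm q n a}))
    \<le> exp (- min 1 (q - 1))"
proof -
  define l where "l = lq_norm q n a"
  interpret product_prob_space "\<lambda>_. dens_measure q" "{..<n}"
    by (intro product_prob_spaceI prob_space_dens_measure assms(1))
  interpret finite_product_prob_space "\<lambda>_. dens_measure q" "{..<n}"
    by unfold_locales simp
  have "0 < l" using assms(2) by (simp add: l_def)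
  have "measure (PiM {..<n} (\<lambda>_. dens_measure q)) (PiE {..<n} (\<lambda>j. {x. \<bar>a j * x\<bar> < l}))
      = (\<Prod>j<n. measure (dens_measure q) {x. \<bar>a j * x\<bar> < l})"
    by (intro finite_measure_PiM_emb) simp
  also have "\<dots> \<le> (\<Prod>j<n. exp (- (min 1 (q - 1) * (\<bar>a j\<bar> / l) powr q)))"
  proof (intro prod_mono conjI)
    fix j assume "j \<in> {..<n}"
    then have "measure (dens_measure q) {x. \<bar>a j * x\<bar> < l} \<le> 1 - min 1 (q - 1) * (\<bar>a j\<bar> / l) powr q"
      using assms(1) \<open>0 < l\<close> by (intro measure_dens_abs_mult_less_le) (auto simp: l_def abs_le_lq_norm)
    also have "\<dots> \<le> exp (- (min 1 (q - 1) * (\<bar>a j\<bar> / l) powr q))"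
      using exp_ge_add_one_self[of "- (min 1 (q - 1) * (\<bar>a j\<bar> / l) powr q)"] by linarith
    finally show "measure (dens_measure q) {x. \<bar>a j * x\<bar> < l} \<le> \<dots>" .
  qed simp
  also have "\<dots> = exp (- (min 1 (q - 1) * (\<Sum>j<n. (\<bar>a j\<bar> / l) powr q)))"
    by (simp add: exp_sum[symmetric] sum_distrib_left sum_negf)
  also have "(\<Sum>j<n. (\<bar>a j\<bar> / l) powr q) = (\<Sum>j<n. \<bar>a j\<bar> powr q) / l powr q"
    using \<open>0 < l\<close> by (simp add: powr_divide sum_divide_distrib)
  also have "\<dots> = 1"
    using \<open>0 < l\<close> assms(1) by (simp add: l_def lq_norm_powr[symmetric])
  finally show ?thesis by (simp add: l_def)
qed

lemma nn_integral_lp_norm_ge: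
  fixes a :: "nat \<Rightarrow> real"
  assumes "1 < q" and "q < p" and "0 < lq_norm q n a"
  shows "ennreal ((1 - exp (- min 1 (q - 1))) * lq_norm q n a)
    \<le> (\<integral>\<^sup>+ \<omega>. ennreal ((\<Sum>j<n. \<bar>a j * \<omega> j\<bar> powr p) powr (1 / p)) \<partial>PiM {..<n} (\<lambda>_. dens_measure q))"
proof -
  let ?P = "PiM {..<n} (\<lambda>_. dens_measure q)"
  let ?Y = "\<lambda>\<omega>. (\<Sum>j<n. \<bar>a j * \<omega> j\<bar> powr p) powr (1 / p)"
  define l where "l = lq_norm q n a"
  define E where "E = {\<omega> \<in> space ?P. l \<le> ?Y \<omega>}"
  define F where "F = PiE {..<n} (\<lambda>j. {x. \<bar>a j * x\<bar> < l})"
  interpret P: prob_space ?P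
    by (intro prob_space_PiM prob_space_dens_measure assms(1))
  have "0 < l" using assms(3) by (simp add: l_def)
  have E_sets: "E \<in> sets ?P" unfolding E_def by measurable
  have F_sets: "F \<in> sets ?P" unfolding F_def by (intro sets_PiM_I_finite) auto
  have "space ?P - F \<subseteq> E"
  proof
    fix \<omega> assume \<omega>: "\<omega> \<in> space ?P - F"
    then obtain j where "j < n" and "l \<le> \<bar>a j * \<omega> j\<bar>"
      by (auto simp: F_def space_PiM PiE_iff not_less)
    moreover have "\<bar>a j * \<omega> j\<bar> \<le> ?Y \<omega>"
      using \<open>j < n\<close> assms(1,2) by (intro abs_le_sum_powr_root) auto
    ultimately show "\<omega> \<in> E" using \<omega> by (simp add: E_def)
  qed
  then have "1 - measure ?P F \<le> measure ?P E"
    using P.prob_compl[OF F_sets] E_sets by (metis P.finite_measure_mono)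
  moreover have "measure ?P F \<le> exp (- min 1 (q - 1))"
    using measure_PiM_coords_below_lq_norm_le[OF assms(1,3)] by (simp add: F_def l_def)
  ultimately have "1 - exp (- min 1 (q - 1)) \<le> measure ?P E" by linarith
  then have "ennreal ((1 - exp (- min 1 (q - 1))) * l) \<le> ennreal l * emeasure ?P E"
    using \<open>0 < l\<close> by (simp add: P.emeasure_eq_measure mult.commute flip: ennreal_mult)
  also have "\<dots> = (\<integral>\<^sup>+ \<omega>. ennreal l * indicator E \<omega> \<partial>?P)"
    using E_sets by (simp add: nn_integral_cmult_indicator)
  also have "\<dots> \<le> (\<integral>\<^sup>+ \<omega>. ennreal (?Y \<omega>) \<partial>?P)"
    by (intro nn_integral_mono) (auto simp: E_def split: split_indicator)
  finally show ?thesis by (simp add: l_def)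
qed

lemma lp_norm_expectation_bounds:
  fixes a :: "nat \<Rightarrow> real" and n :: nat
  assumes "1 < q" and "q < p"
  defines "Y \<equiv> \<lambda>\<omega>. (\<Sum>j<n. \<bar>a j * \<omega> j\<bar> powr p) powr (1 / p)"
  shows "(1 - exp (- min 1 (q - 1))) * lq_norm q n a \<le> (\<integral>\<omega>. Y \<omega> \<partial>PiM {..<n} (\<lambda>_. dens_measure q))
    \<and> (\<integral>\<omega>. Y \<omega> \<partial>PiM {..<n} (\<lambda>_. dens_measure q)) \<le> (1 + (q * (q - 1) / (p - q) + q)) * lq_norm q n a"
proof (cases "lq_norm q n a = 0")
  case True
  then have "a j = 0" if "j < n" for j
    using abs_le_lq_norm[of q j n a] that assms(1) by simp
  then show ?thesis using True by (simp add: Y_def)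
next
  case False
  let ?P = "PiM {..<n} (\<lambda>_. dens_measure q)"
  let ?c = "1 - exp (- min 1 (q - 1))" and ?C = "1 + (q * (q - 1) / (p - q) + q)"
  define N where "N = (\<integral>\<^sup>+ \<omega>. ennreal (Y \<omega>) \<partial>?P)"
  have "0 < lq_norm q n a" using False by (simp add: lq_norm_def)
  then have lower: "ennreal (?c * lq_norm q n a) \<le> N" and upper: "N \<le> ennreal (?C * lq_norm q n a)"
    using nn_integral_lp_norm_ge nn_integral_lp_norm_le assms by (simp_all add: N_def Y_def)
  have "(\<integral>\<omega>. Y \<omega> \<partial>?P) = enn2real N"
    unfolding N_def by (rule integral_eq_nn_integral) (auto simp: Y_def)
  moreover have "?c * lq_norm q n a \<le> enn2real N"
    using enn2real_mono[OF lower] upper \<open>0 < lq_norm q n a\<close> assms(1)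
    by (simp add: top.not_eq_extremum order.strict_trans1)
  moreover have "enn2real N \<le> ?C * lq_norm q n a"
    using enn2real_mono[OF upper] \<open>0 < lq_norm q n a\<close> assms by (simp add: add_pos_pos)
  ultimately show ?thesis by simp
qed

theorem lemma4p1:
  fixes p q :: real
  assumes "1 < q" and "q < p"
  shows "(\<forall>x. 0 \<le> dens q x) \<and> dens q \<in> borel_measurable borel \<and>
         (\<integral>\<^sup>+ x. ennreal (dens q x) \<partial>lborel) = 1 \<and>
         (\<exists>c C. 0 < c \<and> 0 < C \<and>
            (\<forall>(n::nat) (a::nat \<Rightarrow> real).
               c * lq_norm q n a
                 \<le> (\<integral>\<omega>. (\<Sum>j<n. \<bar>a j * \<omega> j\<bar> powr p) powr (1 / p)
                       \<partial>(PiM {..<n} (\<lambda>_. density lborel (dens q)))) \<and>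
               (\<integral>\<omega>. (\<Sum>j<n. \<bar>a j * \<omega> j\<bar> powr p) powr (1 / p)
                       \<partial>(PiM {..<n} (\<lambda>_. density lborel (dens q))))
                 \<le> C * lq_norm q n a))"
proof -
  have "0 < 1 - exp (- min 1 (q - 1))" and "0 < 1 + (q * (q - 1) / (p - q) + q)"
    using assms by (simp_all add: add_pos_pos)
  then show ?thesis
    using dens_nonneg[OF assms(1)] nn_integral_dens_eq_1[OF assms(1)] lp_norm_expectation_bounds[OF assms]
    by (intro conjI allI exI[of _ "1 - exp (- min 1 (q - 1))"] exI[of _ "1 + (q * (q - 1) / (p - q) + q)"]) auto
qed

end
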